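(* Let $c\in C(X_A,\mathbb Z)$ be such that $[c]\in H^A_+$ is an order unit of $(H^A,H^A_+)$ (e.g. $c=l-k$ for a suspension triplet $(l,k,b)$). Then for every $m\in\mathbb N$ there exists $n_m\in\mathbb N$ such that $c^{n_m}(x)\ge m$ for all $x\in X_A$.
   Context: Let $N>1$ and $A$ an irreducible $N\times N$ $\{0,1\}$-matrix which is not a permutation matrix. $X_A$ is the compact space of sequences $(x_n)_{n\in\mathbb N}$, $x_n\in\{1,\dots,N\}$, $A(x_n,x_{n+1})=1$, and $\sigma_A((x_n)_n)=(x_{n+1})_n$. $H^A$ is the quotient of $C(X_A,\mathbb Z)$ by $\{u-u\circ\sigma_A: u\in C(X_A,\mathbb Z)\}$, $[f]$ the class of $f$, $H^A_+=\{[f]: f\in C(X_A,\mathbb Z_+)\}$ ($\mathbb Z_+$ the nonnegative integers); $[f]\in H^A_+$ is an order unit if for every $[u]\in H^A$ there is $n\in\mathbb N$ with $n[f]-[u]\in H^A_+$. For $m\in\mathbb N$, $c^m(x)=\sum_{i=0}^{m-1}c(\sigma_A^i(x))$. A suspension triplet is $(l,k,b)$ with $l,k$ continuous nonnegative real-valued, $b$ continuous real-valued, $l-k$ integer-valued with order-unit class, and $l-b$, $k-b\circ\sigma_A$ $\mathbb Z_+$-valued. *)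

theory Defs
  imports "HOL-Analysis.Analysis"
begin

text \<open>Matrices are N x N {0,1}-matrices indexed by {1..N}, represented as functions
  nat => nat => int (values outside {1..N} are irrelevant).\<close>

definition zero_one_matrix :: "nat \<Rightarrow> (nat \<Rightarrow> nat \<Rightarrow> int) \<Rightarrow> bool" where
  "zero_one_matrix N A \<longleftrightarrow> (\<forall>i\<in>{1..N}. \<forall>j\<in>{1..N}. A i j \<in> {0, 1})"

text \<open>Irreducible: for all i, j there is k > 0 with (A^k)(i,j) > 0, i.e. a path of
  length k from i to j in the transition graph of A.\<close>
definition irreducible_matrix :: "nat \<Rightarrow> (nat \<Rightarrow> nat \<Rightarrow> int) \<Rightarrow> bool" where
  "irreducible_matrix N A \<longleftrightarrow>
     (\<forall>i\<in>{1..N}. \<forall>j\<in>{1..N}. \<exists>k>0. \<exists>p::nat \<Rightarrow> nat.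
        p 0 = i \<and> p k = j \<and> (\<forall>t\<le>k. p t \<in> {1..N}) \<and> (\<forall>t<k. A (p t) (p (Suc t)) = 1))"

definition permutation_matrix :: "nat \<Rightarrow> (nat \<Rightarrow> nat \<Rightarrow> int) \<Rightarrow> bool" where
  "permutation_matrix N A \<longleftrightarrow>
     (\<forall>i\<in>{1..N}. \<forall>j\<in>{1..N}. A i j \<in> {0, 1}) \<and>
     (\<forall>i\<in>{1..N}. \<exists>!j. j \<in> {1..N} \<and> A i j = 1) \<and>
     (\<forall>j\<in>{1..N}. \<exists>!i. i \<in> {1..N} \<and> A i j = 1)"

text \<open>The one-sided topological Markov shift X_A (product topology on nat => nat,
  nat carrying its discrete topology) and the shift map.\<close>
definition XA :: "nat \<Rightarrow> (nat \<Rightarrow> nat \<Rightarrow> int) \<Rightarrow> (nat \<Rightarrow> nat) set" where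
  "XA N A = {x. (\<forall>n. x n \<in> {1..N}) \<and> (\<forall>n. A (x n) (x (Suc n)) = 1)}"

definition sigmaA :: "(nat \<Rightarrow> nat) \<Rightarrow> (nat \<Rightarrow> nat)" where
  "sigmaA x = (\<lambda>n. x (Suc n))"

definition CZ :: "nat \<Rightarrow> (nat \<Rightarrow> nat \<Rightarrow> int) \<Rightarrow> ((nat \<Rightarrow> nat) \<Rightarrow> int) set" where
  "CZ N A = {f. continuous_on (XA N A) f}"

text \<open>[f] \<in> H^A_+ : f is cohomologous (in C(X_A,Z)) to a nonnegative continuous function.\<close>
definition in_HA_plus :: "nat \<Rightarrow> (nat \<Rightarrow> nat \<Rightarrow> int) \<Rightarrow> ((nat \<Rightarrow> nat) \<Rightarrow> int) \<Rightarrow> bool" where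
  "in_HA_plus N A f \<longleftrightarrow>
     (\<exists>g\<in>CZ N A. \<exists>u\<in>CZ N A. (\<forall>x\<in>XA N A. g x \<ge> 0 \<and> f x - g x = u x - u (sigmaA x)))"

definition order_unit :: "nat \<Rightarrow> (nat \<Rightarrow> nat \<Rightarrow> int) \<Rightarrow> ((nat \<Rightarrow> nat) \<Rightarrow> int) \<Rightarrow> bool" where
  "order_unit N A c \<longleftrightarrow> in_HA_plus N A c \<and>
     (\<forall>u\<in>CZ N A. \<exists>n::nat. in_HA_plus N A (\<lambda>x. int n * c x - u x))"

definition birkhoff_sum :: "((nat \<Rightarrow> nat) \<Rightarrow> int) \<Rightarrow> nat \<Rightarrow> (nat \<Rightarrow> nat) \<Rightarrow> int" where
  "birkhoff_sum c m x = (\<Sum>i<m. c ((sigmaA ^^ i) x))"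

end

theory Submission
  imports Defs
begin

text \<open>If \<open>[c]\<close> is an order unit then some multiple dominates \<open>[1]\<close>: \<open>n c - 1 = g + u - u \<circ> \<sigma>\<close> with
  \<open>g \<ge> 0\<close>. Summing along an orbit telescopes the coboundary, so \<open>n c\<^sup>K \<ge> K - 2 sup \<bar>u\<bar>\<close>, and
  \<open>u\<close> is bounded because \<open>X\<^sub>A\<close> is compact. Hence \<open>c\<^sup>K\<close> grows at least like \<open>K / n\<close>, uniformly on
  \<open>X\<^sub>A\<close>.\<close>

lemma continuous_on_bounded_int:
  fixes u :: "'a::topological_space \<Rightarrow> int"
  assumes "compact K" "continuous_on K u"
  obtains B where "\<And>x. x \<in> K \<Longrightarrow> \<bar>u x\<bar> \<le> B"
proof -
  have "compact (insert 0 (u ` K))"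
    using assms by (intro compact_insert compact_continuous_image)
  then obtain s t where "\<forall>y\<in>insert 0 (u ` K). y \<le> s" "\<forall>y\<in>insert 0 (u ` K). t \<le> y"
    by (meson compact_attains_sup compact_attains_inf insert_not_empty)
  then show thesis by (intro that[of "max s (- t)"]) (auto simp: abs_le_iff)
qed

lemma open_prod_discrete:
  "open (S :: ('a::discrete_topology \<times> 'b::discrete_topology) set)"
proof (rule open_prod_intro)
  fix p assume "p \<in> S"
  then show "\<exists>A B. open A \<and> open B \<and> p \<in> A \<times> B \<and> A \<times> B \<subseteq> S"
    by (intro exI[of _ "{fst p}"] exI[of _ "{snd p}"]) (auto simp: open_discrete)
qed

lemma closed_pair_preimage:
  "closed {x::nat \<Rightarrow> 'b::discrete_topology. P (x i) (x j)}"
proof -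
  have "closed {p::'b \<times> 'b. P (fst p) (snd p)}"
    unfolding closed_def by (rule open_prod_discrete)
  moreover have "continuous_on UNIV (\<lambda>x::nat \<Rightarrow> 'b. (x i, x j))"
    by (intro continuous_intros continuous_on_product_coordinates)
  ultimately have "closed ((\<lambda>x::nat \<Rightarrow> 'b. (x i, x j)) -` {p. P (fst p) (snd p)})"
    by (rule closed_vimage)
  then show ?thesis by (simp add: vimage_def)
qed

lemma XA_eq_PiE_Int:
  "XA N A = PiE UNIV (\<lambda>_. {1..N}) \<inter> (\<Inter>n. {x. A (x n) (x (Suc n)) = 1})"
  unfolding XA_def by (auto simp: PiE_iff)

lemma compact_XA: "compact (XA N A)"
proof -
  have "compactin (product_topology (\<lambda>_. euclidean) UNIV) (PiE UNIV (\<lambda>_::nat. {1..N}))"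
    by (simp add: compactin_PiE finite_imp_compact)
  then have "compact (PiE UNIV (\<lambda>_::nat. {1..N}))"
    by (simp add: euclidean_product_topology)
  moreover have "closed (\<Inter>n. {x. A (x n) (x (Suc n)) = 1})"
    by (intro closed_INT ballI closed_pair_preimage)
  ultimately show ?thesis
    unfolding XA_eq_PiE_Int by (rule compact_Int_closed)
qed

lemma sigmaA_in_XA: "x \<in> XA N A \<Longrightarrow> sigmaA x \<in> XA N A"
  unfolding XA_def sigmaA_def by auto

lemma funpow_sigmaA_in_XA: "x \<in> XA N A \<Longrightarrow> (sigmaA ^^ k) x \<in> XA N A"
  by (induction k) (auto intro: sigmaA_in_XA)

lemma birkhoff_sum_Suc:
  "birkhoff_sum f (Suc k) x = birkhoff_sum f k x + f ((sigmaA ^^ k) x)"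
  by (simp add: birkhoff_sum_def)

lemma birkhoff_sum_affine:
  "birkhoff_sum (\<lambda>x. a * f x - b) k x = a * birkhoff_sum f k x - int k * b"
  by (simp add: birkhoff_sum_def sum_distrib_left sum_subtractf)

lemma birkhoff_sum_ge_coboundary:
  assumes "\<And>y. y \<in> XA N A \<Longrightarrow> u y - u (sigmaA y) \<le> f y" and "x \<in> XA N A"
  shows "u x - u ((sigmaA ^^ k) x) \<le> birkhoff_sum f k x"
proof (induction k)
  case 0
  show ?case by (simp add: birkhoff_sum_def)
next
  case (Suc k)
  have "u ((sigmaA ^^ k) x) - u ((sigmaA ^^ Suc k) x) \<le> f ((sigmaA ^^ k) x)"
    using assms(1)[OF funpow_sigmaA_in_XA[OF assms(2)]] by simp
  with Suc.IH show ?case by (simp add: birkhoff_sum_Suc)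
qed

lemma in_HA_plus_birkhoff_sum_bounded_below:
  assumes "in_HA_plus N A f"
  obtains B where "\<And>k x. x \<in> XA N A \<Longrightarrow> - B \<le> birkhoff_sum f k x"
proof -
  obtain g u where "u \<in> CZ N A"
    and cob: "\<And>x. x \<in> XA N A \<Longrightarrow> 0 \<le> g x \<and> f x - g x = u x - u (sigmaA x)"
    using assms unfolding in_HA_plus_def by blast
  then obtain B where B: "\<And>x. x \<in> XA N A \<Longrightarrow> \<bar>u x\<bar> \<le> B"
    using continuous_on_bounded_int[OF compact_XA] unfolding CZ_def by blast
  have "u x - u ((sigmaA ^^ k) x) \<le> birkhoff_sum f k x" if "x \<in> XA N A" for k x
    using cob that by (intro birkhoff_sum_ge_coboundary) force+
  moreover have "- (2 * B) \<le> u x - u ((sigmaA ^^ k) x)" if "x \<in> XA N A" for k x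
    using B[OF that] B[OF funpow_sigmaA_in_XA[OF that, of k]] by (simp add: abs_le_iff)
  ultimately show thesis
    by (intro that[of "2 * B"]) (meson order_trans)
qed

theorem lemma2p2:
  fixes N :: nat and A :: "nat \<Rightarrow> nat \<Rightarrow> int" and c :: "(nat \<Rightarrow> nat) \<Rightarrow> int"
  assumes "N > 1"
    and "zero_one_matrix N A"
    and "irreducible_matrix N A"
    and "\<not> permutation_matrix N A"
    and "c \<in> CZ N A"
    and "order_unit N A c"
  shows "\<forall>m::nat. \<exists>n::nat. \<forall>x\<in>XA N A. birkhoff_sum c n x \<ge> int m"
proof
  fix m :: nat
  have "(\<lambda>_. 1) \<in> CZ N A" by (simp add: CZ_def)
  with assms(6) obtain n :: nat where "in_HA_plus N A (\<lambda>x. int n * c x - 1)"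
    unfolding order_unit_def by (auto dest: bspec[of _ _ "\<lambda>_. 1"])
  then obtain B where B: "\<And>k x. x \<in> XA N A \<Longrightarrow> - B \<le> birkhoff_sum (\<lambda>x. int n * c x - 1) k x"
    by (rule in_HA_plus_birkhoff_sum_bounded_below) blast
  define k where "k = nat B + n * m + 1"
  show "\<exists>k. \<forall>x\<in>XA N A. int m \<le> birkhoff_sum c k x"
  proof (intro exI[of _ k] ballI)
    fix x assume "x \<in> XA N A"
    moreover have "int k = int (nat B) + int n * int m + 1" and "B \<le> int (nat B)"
      by (simp_all add: k_def)
    ultimately have "int n * int m < int n * birkhoff_sum c k x"
      using B[of x k] unfolding birkhoff_sum_affine by linarith
    then have "int m < birkhoff_sum c k x"
      by (rule mult_left_less_imp_less) simp
    then show "int m \<le> birkhoff_sum c k x" by simp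
  qed
qed

end
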